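(* There is a quantity $\eta_n\to0$ as $n\to\infty$ (uniform over configurations, edges, and graphs in $\mathcal H_L$) such that for every $X\in\mathcal G_n$, every pair $e$, and every $G=(V,E)\in\mathcal H_L$, if $X(0)=X$ and $X(1)$ is obtained by one step of the Glauber dynamics, then $$\mathbb E\left[\frac{N_G(X(1),e)-N_G(X(0),e)}{n^{|V|-2}}\right]\le(1+\eta_n)\frac{2}{\binom n2}|E|(|E|-1)\Big[-r_G(X,e)^{|E|-1}+\varphi(\bar r(X))\,\bar r(X)^{|E|-2}\Big].$$
   Context: Fix an integer $s\ge 1$, graphs $G_1,\dots,G_s$ where $G_i$ has vertex set $V_i=\{1,\dots,|V_i|\}$ and edge set $E_i$, with $G_1$ the single edge on $\{1,2\}$, and an integer $L\ge\max_i|V_i|$. Fix $\beta=(\beta_1,\dots,\beta_s)$ with $\beta_1\in\mathbb R$, $\beta_i>0$ for $i\ge 2$. $\mathcal G_n$ is the set of simple graphs on $[n]$ (a graph is its edge set). For a graph $G=(V,E)$, $V=\{1,\dots,m\}$, and $X\in\mathcal G_n$: $N_G(X)$ is the number of injective $\sigma:V\to[n]$ with $\{\sigma(i),\sigma(j)\}\in X$ for all $\{i,j\}\in E$; for a pair $e\in\binom{[n]}2$, $N_G(X,e)$ is the number of injective $\sigma:V\to[n]$ such that $\{\sigma(i),\sigma(j)\}\in X\cup\{e\}$ for all $\{i,j\}\in E$ and $e=\{\sigma(i),\sigma(j)\}$ for some $\{i,j\}\in E$. Gibbs measure $p_n(X)\propto\exp(H(X))$, $H(X)=\sum_i\beta_iN_{G_i}(X)/n^{|V_i|-2}$.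 Glauber dynamics: from $X$, pick a pair $e$ uniformly among the $\binom n2$ pairs, move to $X\cup\{e\}$ with probability $e^{\partial_eH(X)}/(1+e^{\partial_eH(X)})$, where $\partial_eH(X)=H(X\cup\{e\})-H(X\setminus\{e\})$, and to $X\setminus\{e\}$ otherwise. $\Psi(p)=\sum_{i=1}^s2\beta_i|E_i|p^{|E_i|-1}$, $\varphi(p)=e^{\Psi(p)}/(1+e^{\Psi(p)})$. $\mathcal H_L$ is the set of graphs with at most $L$ vertices and at least $2$ edges. For $G=(V,E)\in\mathcal H_L$: $r_G(X,e)=\big(N_G(X,e)/(2|E|n^{|V|-2})\big)^{1/(|E|-1)}$, and $\bar r(X)=\max_{e,\,G\in\mathcal H_L}r_G(X,e)$. *)

theory Defs
  imports Complex_Main "HOL-Library.FuncSet"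
begin

definition pairs :: "nat \<Rightarrow> nat set set" where
  "pairs n = {e. e \<subseteq> {1..n} \<and> card e = 2}"

definition graphs_on :: "nat \<Rightarrow> nat set set set" where
  "graphs_on n = Pow (pairs n)"

text \<open>A small graph G = (m, E) with vertex set {1..m} and edge set E.\<close>
type_synonym sgraph = "nat \<times> nat set set"

definition is_sgraph :: "sgraph \<Rightarrow> bool" where
  "is_sgraph G \<longleftrightarrow> snd G \<subseteq> pairs (fst G)"

definition hom_count :: "sgraph \<Rightarrow> nat \<Rightarrow> nat set set \<Rightarrow> nat" where
  "hom_count G n X = card {\<sigma> \<in> {1..fst G} \<rightarrow>\<^sub>E {1..n}.
      inj_on \<sigma> {1..fst G} \<and> (\<forall>ep\<in>snd G. \<sigma> ` ep \<in> X)}"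

definition hom_count_e :: "sgraph \<Rightarrow> nat \<Rightarrow> nat set set \<Rightarrow> nat set \<Rightarrow> nat" where
  "hom_count_e G n X e = card {\<sigma> \<in> {1..fst G} \<rightarrow>\<^sub>E {1..n}.
      inj_on \<sigma> {1..fst G} \<and> (\<forall>ep\<in>snd G. \<sigma> ` ep \<in> X \<union> {e}) \<and> (\<exists>ep\<in>snd G. \<sigma> ` ep = e)}"

text \<open>Hamiltonian H(X) = sum_i beta_i N_{G_i}(X) / n^(|V_i|-2); indices 0-based.\<close>
definition ham :: "sgraph list \<Rightarrow> real list \<Rightarrow> nat \<Rightarrow> nat set set \<Rightarrow> real" where
  "ham Gs \<beta> n X = (\<Sum>i<length Gs. \<beta> ! i * real (hom_count (Gs ! i) n X)
       / (real n powi (int (fst (Gs ! i)) - 2)))"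

definition dham :: "sgraph list \<Rightarrow> real list \<Rightarrow> nat \<Rightarrow> nat set set \<Rightarrow> nat set \<Rightarrow> real" where
  "dham Gs \<beta> n X e = ham Gs \<beta> n (X \<union> {e}) - ham Gs \<beta> n (X - {e})"

definition glauber_expect ::
  "sgraph list \<Rightarrow> real list \<Rightarrow> nat \<Rightarrow> nat set set \<Rightarrow> (nat set set \<Rightarrow> real) \<Rightarrow> real" where
  "glauber_expect Gs \<beta> n X f =
     (\<Sum>e'\<in>pairs n. (1 / real (n choose 2)) *
        ((exp (dham Gs \<beta> n X e') / (1 + exp (dham Gs \<beta> n X e'))) * f (X \<union> {e'})
         + (1 - exp (dham Gs \<beta> n X e') / (1 + exp (dham Gs \<beta> n X e'))) * f (X - {e'})))"

definition Psi :: "sgraph list \<Rightarrow> real list \<Rightarrow> real \<Rightarrow> real" where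
  "Psi Gs \<beta> p = (\<Sum>i<length Gs. 2 * \<beta> ! i * real (card (snd (Gs ! i)))
       * p ^ (card (snd (Gs ! i)) - 1))"

definition phi :: "sgraph list \<Rightarrow> real list \<Rightarrow> real \<Rightarrow> real" where
  "phi Gs \<beta> p = exp (Psi Gs \<beta> p) / (1 + exp (Psi Gs \<beta> p))"

definition HL :: "nat \<Rightarrow> sgraph set" where
  "HL L = {G. is_sgraph G \<and> fst G \<le> L \<and> card (snd G) \<ge> 2}"

definition rG :: "sgraph \<Rightarrow> nat \<Rightarrow> nat set set \<Rightarrow> nat set \<Rightarrow> real" where
  "rG G n X e = (real (hom_count_e G n X e) /
       (2 * real (card (snd G)) * real n powi (int (fst G) - 2)))
       powr (1 / (real (card (snd G)) - 1))"

definition rbar :: "nat \<Rightarrow> nat \<Rightarrow> nat set set \<Rightarrow> real" where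
  "rbar L n X = Max {rG G n X e | e G. e \<in> pairs n \<and> G \<in> HL L}"

end

theory Submission
  imports Defs
begin

(* One Glauber step resamples a uniformly chosen pair e'; writing
   D(e') = N_G(X+e',e) - N_G(X-e',e) and p(e') for the probability of inserting e',
   the expected increment of N_G(.,e) equals
       (1/C(n,2)) * ( sum_{e'} p(e') D(e')  -  sum_{e' in X} D(e') ).
   The bound is proved exactly, i.e. with eta_n = 0, by three counting facts:
   (1) sum_{e' in X} D(e') = (|E|-1) N_G(X,e), since each embedding counted by N_G(X,e)
       uses exactly |E|-1 edges of X other than e;
   (2) sum_{e'} D(e') <= sum_{k in E} N_{G-k}(X,e), since an embedding gained by inserting e'
       is an embedding of G-k with the edge k mapped onto e';
   (3) N_H(X,e')/n^(|V_H|-2) <= 2|E_H| rbar(X)^(|E_H|-1) for every graph H on <= L vertices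
       (by definition of rbar when |E_H| >= 2, by a direct count when |E_H| <= 1).
   Applied to G-k, fact (3) bounds (2); applied to the G_i, it gives
   dH(X,e') <= Psi(rbar(X)), hence p(e') <= phi(rbar(X)) since the sigmoid is monotone. *)

lemma finite_pairs: "finite (pairs n)"
  by (rule finite_subset[of _ "Pow {1..n}"]) (auto simp: pairs_def)

lemma card_pair: "e \<in> pairs n \<Longrightarrow> card e = 2"
  by (simp add: pairs_def)

lemma pairs_mono: "m \<le> L \<Longrightarrow> pairs m \<subseteq> pairs L"
  by (auto simp: pairs_def)

lemma two_le_of_pair: "e \<in> pairs n \<Longrightarrow> n \<ge> 2"
proof -
  assume e: "e \<in> pairs n"
  have "2 = card e" using e by (simp add: pairs_def)
  also have "\<dots> \<le> card {1..n}" using e by (intro card_mono) (auto simp: pairs_def)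
  finally show "n \<ge> 2" by simp
qed

lemma finite_maps: "finite {\<sigma> \<in> {1..m::nat} \<rightarrow>\<^sub>E {1..n::nat}. P \<sigma>}"
  by (rule finite_subset[OF _ finite_PiE[of "{1..m}" "\<lambda>_. {1..n}"]]) auto

lemma finite_HL: "finite (HL L)"
proof (rule finite_subset)
  show "HL L \<subseteq> {..L} \<times> Pow (pairs L)"
    using pairs_mono by (fastforce simp: HL_def is_sgraph_def)
  show "finite ({..L} \<times> Pow (pairs L))" using finite_pairs[of L] by simp
qed

section \<open>Double counting\<close>

lemma card_filter_split:
  assumes "finite A"
  shows "card A = card {x\<in>A. P x} + card {x\<in>A. \<not> P x}"
  using card_Int_Diff[OF assms, of "Collect P"] by (simp add: Int_def set_diff_eq)

lemma double_count:
  assumes "finite A" "finite B"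
  shows "(\<Sum>y\<in>B. card {x\<in>A. R x y}) = (\<Sum>x\<in>A. card {y\<in>B. R x y})"
proof -
  have count: "card {z\<in>Z. Q z} = (\<Sum>z\<in>Z. if Q z then 1 else 0)" if "finite Z" for Z and Q :: "'c \<Rightarrow> bool"
    using that by (simp add: sum.inter_filter[symmetric])
  have "(\<Sum>y\<in>B. card {x\<in>A. R x y}) = (\<Sum>y\<in>B. \<Sum>x\<in>A. if R x y then 1 else 0)"
    using assms by (simp add: count)
  also have "\<dots> = (\<Sum>x\<in>A. \<Sum>y\<in>B. if R x y then 1 else 0)" by (rule sum.swap)
  also have "\<dots> = (\<Sum>x\<in>A. card {y\<in>B. R x y})"
    using assms by (simp add: count)
  finally show ?thesis .
qed

text \<open>Fibres of a map over distinct values are disjoint, so their sizes add up to at most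
  the size of the domain.\<close>
lemma sum_fibres_le:
  assumes "finite T" "finite Y"
  shows "(\<Sum>y\<in>Y. card {x\<in>T. g x = y}) \<le> card T"
proof -
  have "(\<Sum>y\<in>Y. card {x\<in>T. g x = y}) = (\<Sum>x\<in>T. card {y\<in>Y. g x = y})"
    by (rule double_count[OF assms])
  also have "\<dots> \<le> (\<Sum>x\<in>T. 1)"
  proof (rule sum_mono)
    fix x
    have "{y\<in>Y. g x = y} \<subseteq> {g x}" by auto
    then show "card {y\<in>Y. g x = y} \<le> 1" using card_mono[of "{g x}"] by fastforce
  qed
  finally show ?thesis by simp
qed

section \<open>Embeddings through a prescribed pair\<close>

definition emb_e :: "sgraph \<Rightarrow> nat \<Rightarrow> nat set set \<Rightarrow> nat set \<Rightarrow> (nat \<Rightarrow> nat) set" where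
  "emb_e G n Y e = {\<sigma> \<in> {1..fst G} \<rightarrow>\<^sub>E {1..n}.
      inj_on \<sigma> {1..fst G} \<and> (\<forall>ep\<in>snd G. \<sigma> ` ep \<in> Y \<union> {e}) \<and> (\<exists>ep\<in>snd G. \<sigma> ` ep = e)}"

lemma hom_count_e_card: "hom_count_e G n Y e = card (emb_e G n Y e)"
  by (simp add: hom_count_e_def emb_e_def)

lemma finite_emb_e: "finite (emb_e G n Y e)"
  unfolding emb_e_def by (rule finite_maps)

lemma emb_e_mono: "Y1 \<subseteq> Y2 \<Longrightarrow> emb_e G n Y1 e \<subseteq> emb_e G n Y2 e"
  unfolding emb_e_def by blast

lemma hom_count_e_mono: "Y1 \<subseteq> Y2 \<Longrightarrow> hom_count_e G n Y1 e \<le> hom_count_e G n Y2 e"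
  unfolding hom_count_e_card by (intro card_mono finite_emb_e emb_e_mono)

lemma hom_count_increment:
  "real (hom_count G n (Y \<union> {e})) - real (hom_count G n (Y - {e})) = real (hom_count_e G n Y e)"
proof -
  let ?A = "\<lambda>Z. {\<sigma> \<in> {1..fst G} \<rightarrow>\<^sub>E {1..n}. inj_on \<sigma> {1..fst G} \<and> (\<forall>ep\<in>snd G. \<sigma> ` ep \<in> Z)}"
  have split: "?A (Y \<union> {e}) = ?A (Y - {e}) \<union> emb_e G n Y e"
    and disj: "?A (Y - {e}) \<inter> emb_e G n Y e = {}"
    unfolding emb_e_def by blast+
  have "card (?A (Y \<union> {e})) = card (?A (Y - {e})) + card (emb_e G n Y e)"
    unfolding split by (rule card_Un_disjoint[OF finite_maps finite_emb_e disj])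
  then show ?thesis by (simp add: hom_count_def hom_count_e_card)
qed

lemma edge_image_inj:
  assumes "E \<subseteq> pairs m" "inj_on \<sigma> {1..m}"
  shows "inj_on (\<lambda>ep. \<sigma> ` ep) E"
proof (rule inj_onI)
  fix x y assume "x \<in> E" "y \<in> E" "\<sigma> ` x = \<sigma> ` y"
  moreover have "x \<subseteq> {1..m}" "y \<subseteq> {1..m}" using assms(1) \<open>x \<in> E\<close> \<open>y \<in> E\<close>
    by (auto simp: pairs_def)
  ultimately show "x = y" using assms(2) by (simp add: inj_on_image_eq_iff)
qed

lemma maps_onto_pair_determined:
  assumes ab: "a \<in> {1..m}" "b \<in> {1..m}" "a \<noteq> b"
    and \<sigma>: "\<sigma> \<in> {1..m} \<rightarrow>\<^sub>E {1..n}" "inj_on \<sigma> {1..m}"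
    and \<tau>: "\<tau> \<in> {1..m} \<rightarrow>\<^sub>E {1..n}" "inj_on \<tau> {1..m}"
    and same: "\<sigma> ` {a,b} = \<tau> ` {a,b}" "\<sigma> a = \<tau> a" "\<And>x. x \<in> {1..m} - {a,b} \<Longrightarrow> \<sigma> x = \<tau> x"
  shows "\<sigma> = \<tau>"
proof -
  have "\<sigma> a \<noteq> \<sigma> b" "\<tau> a \<noteq> \<tau> b" using ab \<sigma>(2) \<tau>(2) by (meson inj_onD)+
  then have b: "\<sigma> b = \<tau> b" using same(1,2) by (auto simp: doubleton_eq_iff)
  show ?thesis
  proof (rule PiE_ext[OF \<sigma>(1) \<tau>(1)])
    fix x assume "x \<in> {1..m}"
    then show "\<sigma> x = \<tau> x" using same(2,3) b by (cases "x = a \<or> x = b") auto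
  qed
qed

text \<open>At most 2 n^(m-2) injective maps send a fixed pair {a,b} of [m] onto a given pair:
  the image of a determines the image of b, and the other m-2 vertices are free.\<close>
lemma card_maps_onto_pair:
  assumes ab: "a \<in> {1..m}" "b \<in> {1..m}" "a \<noteq> b" and ce: "card e' = 2"
  shows "card {\<sigma> \<in> {1..m} \<rightarrow>\<^sub>E {1..n}. inj_on \<sigma> {1..m} \<and> \<sigma> ` {a,b} = e'} \<le> 2 * n^(m-2)"
proof -
  let ?S = "{\<sigma> \<in> {1..m} \<rightarrow>\<^sub>E {1..n}. inj_on \<sigma> {1..m} \<and> \<sigma> ` {a,b} = e'}"
  let ?R = "{1..m} - {a,b}"
  define f where "f \<sigma> = (\<sigma> a, restrict \<sigma> ?R)" for \<sigma> :: "nat \<Rightarrow> nat"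
  have inj: "inj_on f ?S"
  proof (rule inj_onI)
    fix \<sigma> \<tau> assume s: "\<sigma> \<in> ?S" and t: "\<tau> \<in> ?S" and eq: "f \<sigma> = f \<tau>"
    have "restrict \<sigma> ?R = restrict \<tau> ?R" using eq by (simp add: f_def)
    then have "\<And>x. x \<in> ?R \<Longrightarrow> \<sigma> x = \<tau> x" by (metis restrict_apply')
    moreover have "\<sigma> a = \<tau> a" using eq by (simp add: f_def)
    ultimately show "\<sigma> = \<tau>"
      using s t by (intro maps_onto_pair_determined[OF ab]) auto
  qed
  have image: "f ` ?S \<subseteq> e' \<times> (?R \<rightarrow>\<^sub>E {1..n})"
  proof
    fix y assume "y \<in> f ` ?S"
    then obtain \<sigma> where s: "\<sigma> \<in> ?S" and y: "y = f \<sigma>" by blast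
    have "\<sigma> \<in> {1..m} \<rightarrow>\<^sub>E {1..n}" using s by blast
    then have "restrict \<sigma> ?R \<in> ?R \<rightarrow>\<^sub>E {1..n}" by (auto simp: restrict_PiE_iff)
    moreover have "\<sigma> a \<in> e'" using s by blast
    ultimately show "y \<in> e' \<times> (?R \<rightarrow>\<^sub>E {1..n})" using y by (simp add: f_def)
  qed
  have "finite e'" using ce by (metis card.infinite zero_neq_numeral)
  then have "finite (e' \<times> (?R \<rightarrow>\<^sub>E {1..n}))" by (simp add: finite_PiE)
  then have "card (f ` ?S) \<le> card (e' \<times> (?R \<rightarrow>\<^sub>E {1..n}))" using image by (rule card_mono)
  then have "card ?S \<le> card (e' \<times> (?R \<rightarrow>\<^sub>E {1..n}))" by (simp only: card_image[OF inj])
  also have "\<dots> = 2 * n ^ card ?R"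
    using ce by (simp add: card_cartesian_product card_PiE)
  also have "card ?R = m - 2"
    using ab by (subst card_Diff_subset) auto
  finally show ?thesis .
qed

lemma hom_count_e_single_edge:
  assumes k: "k \<in> pairs m" and e': "card e' = 2"
  shows "hom_count_e (m, {k}) n X e' \<le> 2 * n ^ (m - 2)"
proof -
  obtain a b where ab: "k = {a,b}" "a \<noteq> b" using k by (auto simp: pairs_def card_2_iff)
  have abm: "a \<in> {1..m}" "b \<in> {1..m}" using k ab by (auto simp: pairs_def)
  have "hom_count_e (m, {k}) n X e'
      \<le> card {\<sigma> \<in> {1..m} \<rightarrow>\<^sub>E {1..n}. inj_on \<sigma> {1..m} \<and> \<sigma> ` {a,b} = e'}"
    unfolding hom_count_e_def using ab by (intro card_mono[OF finite_maps]) auto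
  also have "\<dots> \<le> 2 * n ^ (m - 2)" by (rule card_maps_onto_pair[OF abm ab(2) e'])
  finally show ?thesis .
qed

lemma hom_count_e_edge:
  assumes e: "e \<in> pairs n"
  shows "hom_count_e (2, {{1,2}}) n X e = 2"
proof -
  obtain x y where xy: "e = {x,y}" "x \<noteq> y" using e by (auto simp: pairs_def card_2_iff)
  have xyn: "x \<in> {1..n}" "y \<in> {1..n}" using e xy by (auto simp: pairs_def)
  let ?S = "{\<sigma> \<in> {1..2::nat} \<rightarrow>\<^sub>E {1..n}. inj_on \<sigma> {1..2} \<and> \<sigma> ` {1,2} = e}"
  have eq: "hom_count_e (2, {{1,2}}) n X e = card ?S"
    unfolding hom_count_e_def by (intro arg_cong[where f=card]) auto
  have le: "card ?S \<le> 2 * n ^ (2 - 2)"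
    by (rule card_maps_onto_pair) (auto simp: card_pair[OF e])
  define s where "s u v = (\<lambda>i::nat. if i = 1 then u else if i = 2 then v else undefined)" for u v :: nat
  have i12: "{1..2::nat} = {1,2}" by auto
  have "s x y \<in> ?S" "s y x \<in> ?S"
    using xy xyn by (auto simp: s_def PiE_iff extensional_def inj_on_def i12)
  moreover have "s x y \<noteq> s y x"
  proof
    assume "s x y = s y x"
    then have "s x y 1 = s y x 1" by simp
    then show False using xy by (simp add: s_def)
  qed
  ultimately have "card {s x y, s y x} \<le> card ?S"
    by (intro card_mono[OF finite_maps]) auto
  then have "2 \<le> card ?S" using \<open>s x y \<noteq> s y x\<close> by simp
  with le eq show ?thesis by simp
qed

definition edge_image :: "(nat \<Rightarrow> nat) \<Rightarrow> nat set set \<Rightarrow> nat set set" where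
  "edge_image \<sigma> E = (\<lambda>ep. \<sigma> ` ep) ` E"

lemma deletion_loss_pair:
  assumes "e' \<in> X"
  shows "real (hom_count_e (m,E) n (X \<union> {e'}) e) - real (hom_count_e (m,E) n (X - {e'}) e)
       = real (card {\<sigma>\<in>emb_e (m,E) n X e. e' \<noteq> e \<and> e' \<in> edge_image \<sigma> E})"
proof -
  define A where "A = emb_e (m,E) n X e"
  have "X \<union> {e'} = X" using assms by blast
  moreover have "emb_e (m,E) n (X - {e'}) e = {\<sigma>\<in>A. \<not> (e' \<noteq> e \<and> e' \<in> edge_image \<sigma> E)}"
  proof (intro set_eqI iffI)
    fix \<sigma> assume s: "\<sigma> \<in> emb_e (m,E) n (X - {e'}) e"
    then have "\<forall>ep\<in>E. \<sigma> ` ep \<in> (X - {e'}) \<union> {e}" unfolding emb_e_def by simp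
    then have "\<forall>ep\<in>E. \<sigma> ` ep \<noteq> e' \<or> e' = e" by blast
    moreover have "\<sigma> \<in> A" using s emb_e_mono[of "X - {e'}" X] unfolding A_def by blast
    ultimately show "\<sigma> \<in> {\<sigma>\<in>A. \<not> (e' \<noteq> e \<and> e' \<in> edge_image \<sigma> E)}" unfolding edge_image_def by blast
  next
    fix \<sigma> assume "\<sigma> \<in> {\<sigma>\<in>A. \<not> (e' \<noteq> e \<and> e' \<in> edge_image \<sigma> E)}"
    then have "\<sigma> \<in> A" and "e' = e \<or> (\<forall>ep\<in>E. \<sigma> ` ep \<noteq> e')" unfolding edge_image_def by blast+
    moreover from this(1) have "\<forall>ep\<in>E. \<sigma> ` ep \<in> X \<union> {e}" unfolding A_def emb_e_def by simp
    ultimately have "\<forall>ep\<in>E. \<sigma> ` ep \<in> (X - {e'}) \<union> {e}" by blast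
    with \<open>\<sigma> \<in> A\<close> show "\<sigma> \<in> emb_e (m,E) n (X - {e'}) e" unfolding A_def emb_e_def by simp
  qed
  moreover have "finite A" unfolding A_def by (rule finite_emb_e)
  ultimately show ?thesis
    using card_filter_split[of A "\<lambda>\<sigma>. e' \<noteq> e \<and> e' \<in> edge_image \<sigma> E"]
    unfolding hom_count_e_card A_def by simp
qed

lemma pairs_used_by_embedding:
  assumes E: "E \<subseteq> pairs m" and s: "\<sigma> \<in> emb_e (m,E) n X e"
  shows "card {e'\<in>X. e' \<noteq> e \<and> e' \<in> edge_image \<sigma> E} = card E - 1"
proof -
  have inj: "inj_on \<sigma> {1..m}" using s unfolding emb_e_def by simp
  have card_img: "card (edge_image \<sigma> E) = card E"
    unfolding edge_image_def by (rule card_image[OF edge_image_inj[OF E inj]])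
  have "\<forall>ep\<in>E. \<sigma> ` ep \<in> X \<union> {e}" and "\<exists>ep\<in>E. \<sigma> ` ep = e"
    using s unfolding emb_e_def by simp_all
  then have "e \<in> edge_image \<sigma> E" and sub: "edge_image \<sigma> E \<subseteq> X \<union> {e}"
    unfolding edge_image_def by blast+
  moreover have "finite (edge_image \<sigma> E)"
    unfolding edge_image_def using finite_subset[OF E finite_pairs] by simp
  moreover have "{e'\<in>X. e' \<noteq> e \<and> e' \<in> edge_image \<sigma> E} = edge_image \<sigma> E - {e}"
    using sub by blast
  ultimately show ?thesis using card_img by simp
qed

text \<open>Fact (1): summing the loss over the pairs of X counts each embedding of N_G(X,e)
  once for each of its |E|-1 edges other than the one mapped onto e.\<close>
lemma deletion_loss_sum:
  assumes E: "E \<subseteq> pairs m" and fX: "finite X"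
  shows "(\<Sum>e'\<in>X. real (hom_count_e (m,E) n (X \<union> {e'}) e) - real (hom_count_e (m,E) n (X - {e'}) e))
         = real (card E - 1) * real (hom_count_e (m,E) n X e)"
proof -
  define A where "A = emb_e (m,E) n X e"
  have "(\<Sum>e'\<in>X. real (hom_count_e (m,E) n (X \<union> {e'}) e) - real (hom_count_e (m,E) n (X - {e'}) e))
      = (\<Sum>e'\<in>X. real (card {\<sigma>\<in>A. e' \<noteq> e \<and> e' \<in> edge_image \<sigma> E}))"
    unfolding A_def by (rule sum.cong[OF refl deletion_loss_pair])
  also have "\<dots> = real (\<Sum>e'\<in>X. card {\<sigma>\<in>A. e' \<noteq> e \<and> e' \<in> edge_image \<sigma> E})" by simp
  also have "(\<Sum>e'\<in>X. card {\<sigma>\<in>A. e' \<noteq> e \<and> e' \<in> edge_image \<sigma> E})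
      = (\<Sum>\<sigma>\<in>A. card {e'\<in>X. e' \<noteq> e \<and> e' \<in> edge_image \<sigma> E})"
    unfolding A_def by (rule double_count[OF finite_emb_e fX])
  also have "\<dots> = card A * (card E - 1)"
    unfolding A_def by (simp add: pairs_used_by_embedding[OF E])
  finally show ?thesis unfolding A_def hom_count_e_card by simp
qed

text \<open>An embedding gained by inserting e' maps some edge k onto e', and with k removed it is
  an embedding of G - k counted by N_{G-k}(X,e).\<close>
lemma insertion_gain_pair:
  assumes E: "E \<subseteq> pairs m"
  shows "hom_count_e (m,E) n (X \<union> {e'}) e - hom_count_e (m,E) n (X - {e'}) e
          \<le> (\<Sum>k\<in>E. card {\<sigma>\<in>emb_e (m, E - {k}) n X e. \<sigma> ` k = e'})"
proof -
  define T where "T k = {\<sigma>\<in>emb_e (m, E - {k}) n X e. \<sigma> ` k = e'}" for k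
  define A1 where "A1 = emb_e (m,E) n (X \<union> {e'}) e"
  define A2 where "A2 = emb_e (m,E) n (X - {e'}) e"
  have fE: "finite E" using finite_subset[OF E finite_pairs] .
  have s12: "A2 \<subseteq> A1" unfolding A1_def A2_def by (rule emb_e_mono) blast
  have f2: "finite A2" unfolding A2_def by (rule finite_emb_e)
  have "A1 - A2 \<subseteq> (\<Union>k\<in>E. T k)"
  proof
    fix \<sigma> assume s: "\<sigma> \<in> A1 - A2"
    have pi: "\<sigma> \<in> {1..m} \<rightarrow>\<^sub>E {1..n}" and inj: "inj_on \<sigma> {1..m}"
      and all: "\<forall>ep\<in>E. \<sigma> ` ep \<in> X \<union> {e'} \<union> {e}" and ex: "\<exists>ep\<in>E. \<sigma> ` ep = e"
      using s unfolding A1_def emb_e_def by auto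
    have "\<not> (\<forall>ep\<in>E. \<sigma> ` ep \<in> (X - {e'}) \<union> {e})"
      using s pi inj ex unfolding A2_def emb_e_def by auto
    then obtain k where kE: "k \<in> E" and nk: "\<sigma> ` k \<notin> (X - {e'}) \<union> {e}" by blast
    have ke: "\<sigma> ` k = e'" using nk all kE by blast
    have "\<forall>ep\<in>E - {k}. \<sigma> ` ep \<in> X \<union> {e}"
    proof
      fix ep assume ep: "ep \<in> E - {k}"
      then have "\<sigma> ` ep \<noteq> \<sigma> ` k" using edge_image_inj[OF E inj] kE by (auto dest: inj_onD)
      then show "\<sigma> ` ep \<in> X \<union> {e}" using all ep ke by auto
    qed
    moreover have "\<exists>ep\<in>E - {k}. \<sigma> ` ep = e" using ex nk by auto
    ultimately have "\<sigma> \<in> T k" using pi inj ke unfolding T_def emb_e_def by simp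
    then show "\<sigma> \<in> (\<Union>k\<in>E. T k)" using kE by blast
  qed
  then have "card (A1 - A2) \<le> card (\<Union>k\<in>E. T k)"
    by (rule card_mono[rotated]) (use fE in \<open>simp add: T_def finite_emb_e\<close>)
  also have "\<dots> \<le> (\<Sum>k\<in>E. card (T k))" by (rule card_UN_le[OF fE])
  finally show ?thesis
    using card_Diff_subset[OF f2 s12] unfolding A1_def A2_def T_def hom_count_e_card by simp
qed

text \<open>Fact (2): for fixed k the sets in insertion_gain_pair are fibres of the map
  sigma -> sigma(k) over distinct pairs e', so summing over e' gives at most N_{G-k}(X,e).\<close>
lemma insertion_gain_sum:
  assumes E: "E \<subseteq> pairs m" and fP: "finite P"
  shows "(\<Sum>e'\<in>P. hom_count_e (m,E) n (X \<union> {e'}) e - hom_count_e (m,E) n (X - {e'}) e)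
         \<le> (\<Sum>k\<in>E. hom_count_e (m, E - {k}) n X e)"
proof -
  have "(\<Sum>e'\<in>P. hom_count_e (m,E) n (X \<union> {e'}) e - hom_count_e (m,E) n (X - {e'}) e)
      \<le> (\<Sum>e'\<in>P. \<Sum>k\<in>E. card {\<sigma>\<in>emb_e (m, E - {k}) n X e. \<sigma> ` k = e'})"
    by (rule sum_mono) (rule insertion_gain_pair[OF E])
  also have "\<dots> = (\<Sum>k\<in>E. \<Sum>e'\<in>P. card {\<sigma>\<in>emb_e (m, E - {k}) n X e. \<sigma> ` k = e'})"
    by (rule sum.swap)
  also have "\<dots> \<le> (\<Sum>k\<in>E. card (emb_e (m, E - {k}) n X e))"
    by (rule sum_mono) (rule sum_fibres_le[OF finite_emb_e fP])
  finally show ?thesis unfolding hom_count_e_card .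
qed

section \<open>The normalised densities r_G\<close>

lemma powr_inverse_pow:
  fixes x :: real and c :: nat
  assumes "x \<ge> 0" "c \<ge> 2"
  shows "(x powr (1 / (real c - 1))) ^ (c - 1) = x"
proof (cases "x = 0")
  case True then show ?thesis using assms by simp
next
  case False
  then have x: "x > 0" using assms by simp
  have c: "real c - 1 = real (c - 1)" "real (c - 1) \<noteq> 0" using assms by auto
  have "(x powr (1 / (real c - 1))) ^ (c - 1) = x powr (1 / real (c - 1) * real (c - 1))"
    using x by (simp add: c(1) powr_realpow[symmetric] powr_powr)
  then show ?thesis using x c(2) by simp
qed

lemma rG_pow:
  assumes "card (snd H) \<ge> 2"
  shows "rG H n X e ^ (card (snd H) - 1)
         = real (hom_count_e H n X e) / (2 * real (card (snd H)) * real n powi (int (fst H) - 2))"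
  unfolding rG_def by (rule powr_inverse_pow) (use assms in simp_all)

lemma rG_le_rbar:
  assumes "e \<in> pairs n" "G \<in> HL L"
  shows "rG G n X e \<le> rbar L n X"
proof -
  have "{rG G' n X e' | e' G'. e' \<in> pairs n \<and> G' \<in> HL L}
      = (\<lambda>(e', G'). rG G' n X e') ` (pairs n \<times> HL L)" by auto
  then have "finite {rG G' n X e' | e' G'. e' \<in> pairs n \<and> G' \<in> HL L}"
    using finite_pairs finite_HL by simp
  then show ?thesis unfolding rbar_def using assms by (intro Max_ge) blast+
qed

text \<open>Fact (3): the density of embeddings of any graph H on at most L vertices through a
  pair e' is controlled by rbar.  For |E_H| \<ge> 2 this is the definition of rbar; graphs with
  fewer edges are counted directly.\<close>
lemma density_le_rbar:
  assumes H: "is_sgraph H" "fst H \<le> L" and e': "e' \<in> pairs n"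
  shows "real (hom_count_e H n X e') / real n powi (int (fst H) - 2)
         \<le> 2 * real (card (snd H)) * rbar L n X ^ (card (snd H) - 1)"
proof -
  obtain m E where HmE: "H = (m, E)" by fastforce
  have E: "E \<subseteq> pairs m" using H HmE by (simp add: is_sgraph_def)
  have fE: "finite E" using finite_subset[OF E finite_pairs] .
  have n: "n > 0" using two_le_of_pair[OF e'] by simp
  have w: "real n powi (int m - 2) > 0" using n by simp
  consider "E = {}" | k where "E = {k}" | "card E \<ge> 2"
    by (metis One_nat_def card_1_singletonE card_0_eq fE less_2_cases not_le)
  then show ?thesis
  proof cases
    case 1
    then show ?thesis using HmE by (simp add: hom_count_e_def)
  next
    case (2 k)
    have k: "k \<in> pairs m" using E 2 by simp
    then have "m \<ge> 2" by (rule two_le_of_pair)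
    then have w2: "real n powi (int m - 2) = real n ^ (m - 2)"
      by (metis of_nat_diff of_nat_numeral power_int_of_nat)
    have "hom_count_e (m, {k}) n X e' \<le> 2 * n ^ (m - 2)"
      by (rule hom_count_e_single_edge[OF k card_pair[OF e']])
    then have "real (hom_count_e (m, {k}) n X e') \<le> 2 * real n ^ (m - 2)"
      by (metis of_nat_le_iff of_nat_mult of_nat_numeral of_nat_power)
    then show ?thesis using HmE 2 w2 n by (simp add: divide_le_eq)
  next
    case 3
    have "H \<in> HL L" using H 3 HmE by (simp add: HL_def)
    then have r: "0 \<le> rG H n X e'" "rG H n X e' \<le> rbar L n X"
      using rG_le_rbar[OF e'] by (simp_all add: rG_def)
    have "real (hom_count_e H n X e') / real n powi (int m - 2)
        = 2 * real (card E) * rG H n X e' ^ (card E - 1)"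
      using rG_pow[of H n X e'] 3 w HmE by (simp add: field_simps)
    also have "\<dots> \<le> 2 * real (card E) * rbar L n X ^ (card E - 1)"
      by (intro mult_left_mono power_mono r) simp_all
    finally show ?thesis using HmE by simp
  qed
qed

section \<open>The acceptance probability\<close>

definition sigmoid :: "real \<Rightarrow> real" where
  "sigmoid x = exp x / (1 + exp x)"

lemma sigmoid_nonneg: "0 \<le> sigmoid x"
  by (simp add: sigmoid_def add_pos_pos less_imp_le)

lemma sigmoid_mono:
  assumes "a \<le> b" shows "sigmoid a \<le> sigmoid b"
proof -
  have "exp a * (1 + exp b) \<le> exp b * (1 + exp a)" using assms by (simp add: algebra_simps)
  then show ?thesis unfolding sigmoid_def by (simp add: divide_simps add_pos_pos)
qed

lemma dham_eq:
  "dham Gs \<beta> n X e' = (\<Sum>i<length Gs. \<beta> ! i * real (hom_count_e (Gs ! i) n X e')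
       / real n powi (int (fst (Gs ! i)) - 2))"
  unfolding dham_def ham_def sum_subtractf[symmetric]
  by (rule sum.cong[OF refl]) (simp add: hom_count_increment[symmetric] diff_divide_distrib right_diff_distrib)

text \<open>Term by term via fact (3): the edge term contributes exactly 2 beta_1 and the
  other terms have positive weights.\<close>
lemma dham_le_Psi:
  assumes "\<forall>i<length Gs. is_sgraph (Gs ! i)"
    and "Gs ! 0 = (2, {{1, 2}})"
    and "\<forall>i<length Gs. i \<ge> 1 \<longrightarrow> \<beta> ! i > 0"
    and "\<forall>i<length Gs. fst (Gs ! i) \<le> L"
    and e': "e' \<in> pairs n"
  shows "dham Gs \<beta> n X e' \<le> Psi Gs \<beta> (rbar L n X)"
  unfolding dham_eq Psi_def
proof (rule sum_mono)
  fix i assume i: "i \<in> {..<length Gs}"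
  show "\<beta> ! i * real (hom_count_e (Gs ! i) n X e') / real n powi (int (fst (Gs ! i)) - 2)
      \<le> 2 * \<beta> ! i * real (card (snd (Gs ! i))) * rbar L n X ^ (card (snd (Gs ! i)) - 1)"
  proof (cases "i = 0")
    case True
    then show ?thesis using assms(2) hom_count_e_edge[OF e'] by simp
  next
    case False
    then have "\<beta> ! i \<ge> 0" using assms(3) i by (simp add: less_imp_le)
    moreover have "real (hom_count_e (Gs ! i) n X e') / real n powi (int (fst (Gs ! i)) - 2)
        \<le> 2 * real (card (snd (Gs ! i))) * rbar L n X ^ (card (snd (Gs ! i)) - 1)"
      using assms(1,4) i by (intro density_le_rbar[OF _ _ e']) auto
    ultimately have "\<beta> ! i * (real (hom_count_e (Gs ! i) n X e') / real n powi (int (fst (Gs ! i)) - 2))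
        \<le> \<beta> ! i * (2 * real (card (snd (Gs ! i))) * rbar L n X ^ (card (snd (Gs ! i)) - 1))"
      by (intro mult_left_mono)
    then show ?thesis by (simp add: algebra_simps)
  qed
qed

lemma accept_le_phi:
  assumes "\<forall>i<length Gs. is_sgraph (Gs ! i)"
    and "Gs ! 0 = (2, {{1, 2}})"
    and "\<forall>i<length Gs. i \<ge> 1 \<longrightarrow> \<beta> ! i > 0"
    and "\<forall>i<length Gs. fst (Gs ! i) \<le> L"
    and "e' \<in> pairs n"
  shows "sigmoid (dham Gs \<beta> n X e') \<le> phi Gs \<beta> (rbar L n X)"
  unfolding phi_def sigmoid_def[symmetric] by (intro sigmoid_mono dham_le_Psi assms)

section \<open>The expected increment\<close>

text \<open>Drift formula: only pairs e' with a net change contribute; inserting happens with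
  probability sigmoid(dH(X,e')), and for e' in X the walk moves down from X = X + e'.\<close>
lemma glauber_drift_formula:
  assumes X: "X \<subseteq> pairs n"
  shows "glauber_expect Gs \<beta> n X (\<lambda>Y. (f Y - f X) / w)
       = ((\<Sum>e'\<in>pairs n. sigmoid (dham Gs \<beta> n X e') * (f (X \<union> {e'}) - f (X - {e'})))
          - (\<Sum>e'\<in>X. f (X \<union> {e'}) - f (X - {e'}))) / (real (n choose 2) * w)"
proof -
  define C where "C = real (n choose 2)"
  define D where "D e' = f (X \<union> {e'}) - f (X - {e'})" for e'
  have step: "1 / C * (q * ((f (X \<union> {e'}) - f X) / w) + (1 - q) * ((f (X - {e'}) - f X) / w))
      = (q * D e' - (if e' \<in> X then D e' else 0)) / (C * w)" for q e'
  proof (cases "e' \<in> X")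
    case True
    then have "X \<union> {e'} = X" by blast
    then show ?thesis using True unfolding D_def
      by (cases "w = 0"; cases "C = 0") (simp_all add: field_simps)
  next
    case False
    then have "X - {e'} = X" by blast
    then show ?thesis using False unfolding D_def
      by (cases "w = 0"; cases "C = 0") (simp_all add: field_simps)
  qed
  have "glauber_expect Gs \<beta> n X (\<lambda>Y. (f Y - f X) / w)
      = (\<Sum>e'\<in>pairs n. (sigmoid (dham Gs \<beta> n X e') * D e' - (if e' \<in> X then D e' else 0)) / (C * w))"
    unfolding glauber_expect_def sigmoid_def[symmetric] C_def[symmetric] by (simp only: step)
  also have "\<dots> = ((\<Sum>e'\<in>pairs n. sigmoid (dham Gs \<beta> n X e') * D e')
      - (\<Sum>e'\<in>pairs n. if e' \<in> X then D e' else 0)) / (C * w)"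
    by (simp add: sum_divide_distrib[symmetric] sum_subtractf)
  also have "(\<Sum>e'\<in>pairs n. if e' \<in> X then D e' else 0) = (\<Sum>e'\<in>X. D e')"
    using X by (simp add: sum.inter_restrict[OF finite_pairs, symmetric] Int_absorb1)
  finally show ?thesis unfolding C_def D_def .
qed

text \<open>Facts (2) and (3) together: the total gain over all pairs is at most
  2 |E| (|E|-1) n^(|V|-2) rbar^(|E|-2).\<close>
lemma insertion_gain_le_rbar:
  assumes G: "G \<in> HL L" and e: "e \<in> pairs n"
  shows "(\<Sum>e'\<in>pairs n. real (hom_count_e G n (X \<union> {e'}) e) - real (hom_count_e G n (X - {e'}) e))
    \<le> 2 * real (card (snd G)) * (real (card (snd G)) - 1) * real n powi (int (fst G) - 2)
       * rbar L n X ^ (card (snd G) - 2)"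
proof -
  obtain m E where GmE: "G = (m, E)" by fastforce
  have E: "E \<subseteq> pairs m" and mL: "m \<le> L" and c2: "card E \<ge> 2"
    using G GmE by (auto simp: HL_def is_sgraph_def)
  have fE: "finite E" using finite_subset[OF E finite_pairs] .
  define w where "w = real n powi (int m - 2)"
  have w: "w > 0" using two_le_of_pair[OF e] by (simp add: w_def)
  have mono: "hom_count_e (m,E) n (X - {e'}) e \<le> hom_count_e (m,E) n (X \<union> {e'}) e" for e'
    by (rule hom_count_e_mono) blast
  text \<open>Each G - k has |E|-1 edges, so fact (3) bounds N_{G-k}(X,e) by 2(|E|-1) w rbar^(|E|-2).\<close>
  have minus_edge: "real (hom_count_e (m, E - {k}) n X e) \<le> 2 * (real (card E) - 1) * w * rbar L n X ^ (card E - 2)"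
    if k: "k \<in> E" for k
  proof -
    have "is_sgraph (m, E - {k})" using E by (auto simp: is_sgraph_def)
    from density_le_rbar[OF this _ e, of L X] mL
    have "real (hom_count_e (m, E - {k}) n X e) / w
        \<le> 2 * real (card (E - {k})) * rbar L n X ^ (card (E - {k}) - 1)"
      by (simp only: fst_conv snd_conv w_def)
    moreover have "card (E - {k}) = card E - 1" "card E - 1 - 1 = card E - 2"
      "real (card E - 1) = real (card E) - 1" using k fE c2 by auto
    ultimately have "real (hom_count_e (m, E - {k}) n X e) / w
        \<le> 2 * (real (card E) - 1) * rbar L n X ^ (card E - 2)" by simp
    then show ?thesis using w by (simp add: pos_divide_le_eq mult_ac)
  qed
  have "(\<Sum>e'\<in>pairs n. real (hom_count_e G n (X \<union> {e'}) e) - real (hom_count_e G n (X - {e'}) e))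
      = real (\<Sum>e'\<in>pairs n. hom_count_e (m,E) n (X \<union> {e'}) e - hom_count_e (m,E) n (X - {e'}) e)"
    using mono by (simp add: GmE)
  also have "\<dots> \<le> real (\<Sum>k\<in>E. hom_count_e (m, E - {k}) n X e)"
    using insertion_gain_sum[OF E finite_pairs] by (simp only: of_nat_le_iff)
  also have "\<dots> \<le> (\<Sum>k\<in>E. 2 * (real (card E) - 1) * w * rbar L n X ^ (card E - 2))"
    unfolding of_nat_sum by (rule sum_mono) (rule minus_edge)
  finally show ?thesis by (simp add: GmE w_def mult_ac)
qed

text \<open>The insertion part of the drift: each acceptance probability is at most
  phi(rbar) (accept_le_phi) and the gains add up as in insertion_gain_le_rbar.\<close>
lemma weighted_gain_le_phi:
  assumes model: "\<forall>i<length Gs. is_sgraph (Gs ! i)" "Gs ! 0 = (2, {{1, 2}})"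
      "\<forall>i<length Gs. i \<ge> 1 \<longrightarrow> \<beta> ! i > 0" "\<forall>i<length Gs. fst (Gs ! i) \<le> L"
    and G: "G \<in> HL L" and e: "e \<in> pairs n"
  shows "(\<Sum>e'\<in>pairs n. sigmoid (dham Gs \<beta> n X e')
            * (real (hom_count_e G n (X \<union> {e'}) e) - real (hom_count_e G n (X - {e'}) e)))
    \<le> phi Gs \<beta> (rbar L n X) * (2 * real (card (snd G)) * (real (card (snd G)) - 1)
       * real n powi (int (fst G) - 2) * rbar L n X ^ (card (snd G) - 2))"
proof -
  define D where "D e' = real (hom_count_e G n (X \<union> {e'}) e) - real (hom_count_e G n (X - {e'}) e)" for e'
  have D: "D e' \<ge> 0" for e'
    using hom_count_e_mono[of "X - {e'}" "X \<union> {e'}" G n e] by (auto simp: D_def)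
  have "(\<Sum>e'\<in>pairs n. sigmoid (dham Gs \<beta> n X e') * D e')
      \<le> (\<Sum>e'\<in>pairs n. phi Gs \<beta> (rbar L n X) * D e')"
    using accept_le_phi[OF model] D by (intro sum_mono mult_right_mono) auto
  also have "\<dots> = phi Gs \<beta> (rbar L n X) * (\<Sum>e'\<in>pairs n. D e')"
    by (simp add: sum_distrib_left)
  also have "\<dots> \<le> phi Gs \<beta> (rbar L n X) * (2 * real (card (snd G)) * (real (card (snd G)) - 1)
       * real n powi (int (fst G) - 2) * rbar L n X ^ (card (snd G) - 2))"
    using insertion_gain_le_rbar[OF G e, of X] sigmoid_nonneg
    unfolding D_def phi_def sigmoid_def[symmetric] by (intro mult_left_mono) simp_all
  finally show ?thesis unfolding D_def .
qed

text \<open>The deletion part of the drift, fact (1) rewritten through r_G.\<close>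
lemma deletion_loss_rG:
  assumes G: "G \<in> HL L" and X: "X \<in> graphs_on n" and e: "e \<in> pairs n"
  shows "(\<Sum>e'\<in>X. real (hom_count_e G n (X \<union> {e'}) e) - real (hom_count_e G n (X - {e'}) e))
    = (real (card (snd G)) - 1) * (2 * real (card (snd G)) * real n powi (int (fst G) - 2)
        * rG G n X e ^ (card (snd G) - 1))"
proof -
  obtain m E where GmE: "G = (m, E)" by fastforce
  have E: "E \<subseteq> pairs m" and c2: "card E \<ge> 2" using G GmE by (auto simp: HL_def is_sgraph_def)
  have fX: "finite X" using X finite_subset[OF _ finite_pairs] by (auto simp: graphs_on_def)
  define w where "w = real n powi (int m - 2)"
  have w: "w > 0" using two_le_of_pair[OF e] by (simp add: w_def)
  have "rG G n X e ^ (card E - 1) = real (hom_count_e G n X e) / (2 * real (card E) * w)"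
    using rG_pow[of G n X e] c2 by (simp add: GmE w_def)
  then have "real (hom_count_e G n X e) = 2 * real (card E) * w * rG G n X e ^ (card E - 1)"
    using c2 w by (simp add: field_simps)
  then show ?thesis
    using deletion_loss_sum[OF E fX, of n e] c2 by (simp add: GmE w_def)
qed

lemma glauber_drift_bound:
  assumes model: "\<forall>i<length Gs. is_sgraph (Gs ! i)" "Gs ! 0 = (2, {{1, 2}})"
      "\<forall>i<length Gs. i \<ge> 1 \<longrightarrow> \<beta> ! i > 0" "\<forall>i<length Gs. fst (Gs ! i) \<le> L"
    and X: "X \<in> graphs_on n" and e: "e \<in> pairs n" and G: "G \<in> HL L"
  shows "glauber_expect Gs \<beta> n X
           (\<lambda>Y. (real (hom_count_e G n Y e) - real (hom_count_e G n X e)) / real n powi (int (fst G) - 2))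
       \<le> (2 / real (n choose 2)) * real (card (snd G)) * (real (card (snd G)) - 1)
          * (- (rG G n X e ^ (card (snd G) - 1))
             + phi Gs \<beta> (rbar L n X) * rbar L n X ^ (card (snd G) - 2))"
proof -
  define c where "c = real (card (snd G))"
  define w where "w = real n powi (int (fst G) - 2)"
  define C where "C = real (n choose 2)"
  define N where "N Y = real (hom_count_e G n Y e)" for Y
  define gain where "gain = (\<Sum>e'\<in>pairs n. sigmoid (dham Gs \<beta> n X e') * (N (X \<union> {e'}) - N (X - {e'})))"
  define loss where "loss = (\<Sum>e'\<in>X. N (X \<union> {e'}) - N (X - {e'}))"
  have w: "w > 0" and C: "C > 0" using two_le_of_pair[OF e] by (simp_all add: w_def C_def)
  have "glauber_expect Gs \<beta> n X (\<lambda>Y. (N Y - N X) / w) = (gain - loss) / (C * w)"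
    unfolding gain_def loss_def C_def
    by (rule glauber_drift_formula) (use X in \<open>simp add: graphs_on_def\<close>)
  also have "\<dots> \<le> (phi Gs \<beta> (rbar L n X) * (2 * c * (c - 1) * w * rbar L n X ^ (card (snd G) - 2))
      - loss) / (C * w)"
    using weighted_gain_le_phi[OF model G e, of X] C w
    by (intro divide_right_mono) (simp_all add: gain_def N_def c_def w_def)
  also have "\<dots> = 2 / C * c * (c - 1) * (- (rG G n X e ^ (card (snd G) - 1))
      + phi Gs \<beta> (rbar L n X) * rbar L n X ^ (card (snd G) - 2))"
    unfolding loss_def N_def deletion_loss_rG[OF G X e] c_def[symmetric] w_def[symmetric]
    using C w by (simp add: field_simps)
  finally show ?thesis by (simp add: N_def w_def C_def c_def)
qed

theorem mainTheorem5:
  fixes Gs :: "sgraph list" and \<beta> :: "real list" and L :: nat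
  assumes "length Gs \<ge> 1"
    and "length \<beta> = length Gs"
    and "\<forall>i<length Gs. is_sgraph (Gs ! i)"
    and "Gs ! 0 = (2, {{1, 2}})"
    and "\<forall>i<length Gs. i \<ge> 1 \<longrightarrow> \<beta> ! i > 0"
    and "\<forall>i<length Gs. fst (Gs ! i) \<le> L"
  shows "\<exists>\<eta> :: nat \<Rightarrow> real. \<eta> \<longlonglongrightarrow> 0 \<and>
    (\<forall>n X e G. X \<in> graphs_on n \<longrightarrow> e \<in> pairs n \<longrightarrow> G \<in> HL L \<longrightarrow>
       glauber_expect Gs \<beta> n X
         (\<lambda>Y. (real (hom_count_e G n Y e) - real (hom_count_e G n X e))
                / real n powi (int (fst G) - 2))
       \<le> (1 + \<eta> n) * (2 / real (n choose 2))
          * real (card (snd G)) * (real (card (snd G)) - 1)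
          * (- (rG G n X e ^ (card (snd G) - 1))
             + phi Gs \<beta> (rbar L n X) * rbar L n X ^ (card (snd G) - 2)))"
proof (intro exI[of _ "\<lambda>_. 0"] conjI allI impI)
  show "(\<lambda>_. 0::real) \<longlonglongrightarrow> 0" by simp
next
  fix n X e G
  assume "X \<in> graphs_on n" "e \<in> pairs n" "G \<in> HL L"
  from glauber_drift_bound[OF assms(3-6) this] show "glauber_expect Gs \<beta> n X
         (\<lambda>Y. (real (hom_count_e G n Y e) - real (hom_count_e G n X e)) / real n powi (int (fst G) - 2))
       \<le> (1 + 0) * (2 / real (n choose 2)) * real (card (snd G)) * (real (card (snd G)) - 1)
          * (- (rG G n X e ^ (card (snd G) - 1))
             + phi Gs \<beta> (rbar L n X) * rbar L n X ^ (card (snd G) - 2))"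
    by simp
qed
end
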